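(* Fix $y_1\in T_2$ and for each integer $m>1$ set $$\Theta_m(y_1):=\Big\{y\in T_2:\ \beta(y,y_1)\in\Big[\frac{\pi}{2}-\frac1m,\frac{\pi}{2}\Big]\Big\}.$$ Unless $\Theta_m(y_1)$ is empty for all sufficiently large $m$, there exist $M>0$ and $K>0$ such that $$|s^+(y_1)-s^+(y)|\ge K|y_1-y|\qquad\text{for all } y\in\Theta_m(y_1)\text{ and all } m>M.$$
   Context: Setting. $n>1$, $\mathbf S^n$ the unit sphere in $\mathbf R^{n+1}$; $(\mu,\nu)$ symmetrically suitable Borel probability measures on $\mathbf S^n$ (there is $\epsilon>0$ with $\epsilon\mathcal H^n\le\mu,\nu\le\epsilon^{-1}\mathcal H^n$). For optimal transport with cost $|x-y|^2$, by Gangbo–McCann there is a convex potential $\psi$ with homeomorphism $t^+:\mathbf S^n\to\mathbf S^n$, its inverse $s^+:=(t^+)^{-1}$, a bivalent target set $T_2\subset\mathbf S^n$ and a continuous injective map $s^-:T_2\to\mathbf S^n$ such that for $y\in T_2$: $s^+(y)\ne s^-(y)$, $y\cdot s^+(y)>0$, $y\cdot s^-(y)<0$, and $s^+(y)-s^-(y)=\omega(y)y$ with $\omega(y)>0$; moreover $(s^-(y_1)-s^-(y_0))\cdot(y_1-y_0)\ge0$ for $y_0,y_1\in T_2$ (monotonicity of $\partial\psi$). For $y,y_1\in T_2$ with $y\ne\pm y_1$, $\beta(y,y_1)$ denotes the angle $\arccos\frac{a\cdot b}{|a||b|}$ between $a=y_1-y$ and $b=\omega(y_1)y_1-\omega(y)y$.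 *)

theory Defs
  imports "HOL-Analysis.Analysis"
begin

definition beta_angle :: "('a::real_inner \<Rightarrow> real) \<Rightarrow> 'a \<Rightarrow> 'a \<Rightarrow> real" where
  "beta_angle \<omega> y y1 =
     (let a = y1 - y; b = \<omega> y1 *\<^sub>R y1 - \<omega> y *\<^sub>R y
      in arccos ((a \<bullet> b) / (norm a * norm b)))"

text \<open>Theta_m(y1): points y of T2 (with y distinct from y1 and -y1, where beta is defined)
  whose angle beta(y,y1) lies in [pi/2 - 1/m, pi/2].\<close>
definition Theta :: "'a::real_inner set \<Rightarrow> ('a \<Rightarrow> real) \<Rightarrow> nat \<Rightarrow> 'a \<Rightarrow> 'a set" where
  "Theta T2 \<omega> m y1 =
     {y \<in> T2. y \<noteq> y1 \<and> y \<noteq> - y1 \<and>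
        beta_angle \<omega> y y1 \<in> {pi/2 - 1 / real m .. pi/2}}"

end

theory Submission
  imports Defs
begin

text \<open>
  Write a = y1 - y and b = \<omega>(y1) y1 - \<omega>(y) y.  All of y, y1, s+(y), s-(y) are
  unit vectors and s+(y) - s-(y) = \<omega>(y) y, so y \<bullet> s+(y) = \<omega>(y)/2 and \<omega>(y) \<le> 2.  From this:
  - a \<bullet> b = (\<omega>(y1) + \<omega>(y)) |a|^2 / 2  (the chord identity on the sphere);
  - |b| \<le> |\<omega>(y1) - \<omega>(y)| + 2|a|  (triangle inequality);
  - |\<omega>(y1) - \<omega>(y)| \<le> 2|s+(y1) - s+(y)| + 2|a|  (comparing y \<bullet> s+(y) = \<omega>(y)/2 at y and y1).
  If \<beta>(y,y1) \<ge> \<pi>/2 - t then a \<bullet> b \<le> t |a| |b|.  Chaining these estimates gives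
  \<omega>(y1) |a| \<le> 4t |s+(y1) - s+(y)| + 8t |a|, which forces |a| \<le> |s+(y1) - s+(y)| as soon as
  12 t < \<omega>(y1).  With t = 1/m this holds for all m > M := 12/\<omega>(y1), so the theorem holds
  with K = 1.
\<close>

lemma unit_split_weight:
  fixes y p q :: "'a::real_inner"
  assumes ny: "norm y = 1" and np: "norm p = 1" and nq: "norm q = 1"
    and w: "w > 0" and split: "p - q = w *\<^sub>R y"
  shows "y \<bullet> p = w / 2" and "w \<le> 2"
proof -
  have yy: "y \<bullet> y = 1" and pp: "p \<bullet> p = 1" and qq: "q \<bullet> q = 1"
    using ny np nq by (simp_all add: norm_eq_1)
  have q: "q = p - w *\<^sub>R y" using split by (simp add: algebra_simps)
  have "1 = p \<bullet> p - 2 * w * (y \<bullet> p) + w * w"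
    using qq yy unfolding q by (simp add: inner_diff_left inner_diff_right inner_commute algebra_simps)
  hence "w * w = w * (2 * (y \<bullet> p))" using pp by simp
  thus yp: "y \<bullet> p = w / 2" using w by simp
  have "y \<bullet> p \<le> norm y * norm p" by (rule norm_cauchy_schwarz)
  thus "w \<le> 2" using yp ny np by simp
qed

lemma chord_inner_weighted:
  fixes y y1 :: "'a::real_inner"
  assumes "norm y = 1" and "norm y1 = 1"
  shows "(y1 - y) \<bullet> (w1 *\<^sub>R y1 - w *\<^sub>R y) = (w1 + w) * (norm (y1 - y))\<^sup>2 / 2"
proof -
  have yy: "y \<bullet> y = 1" and y1y1: "y1 \<bullet> y1 = 1" using assms by (simp_all add: norm_eq_1)
  have chord: "(norm (y1 - y))\<^sup>2 = 2 - 2 * (y \<bullet> y1)"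
    using yy y1y1 by (simp add: power2_norm_eq_inner inner_diff_left inner_diff_right inner_commute)
  have "(y1 - y) \<bullet> (w1 *\<^sub>R y1 - w *\<^sub>R y) = (w1 + w) * (1 - y \<bullet> y1)"
    using yy y1y1 by (simp add: inner_diff_left inner_diff_right inner_commute algebra_simps)
  thus ?thesis unfolding chord by simp
qed

text \<open>Size of b = w1 y1 - w y: split b = (w1 - w) y1 + w (y1 - y).\<close>
lemma norm_weighted_chord_le:
  fixes y y1 :: "'a::real_normed_vector"
  assumes "norm y1 = 1" and "0 \<le> w" and "w \<le> 2"
  shows "norm (w1 *\<^sub>R y1 - w *\<^sub>R y) \<le> \<bar>w1 - w\<bar> + 2 * norm (y1 - y)"
proof -
  have "w1 *\<^sub>R y1 - w *\<^sub>R y = (w1 - w) *\<^sub>R y1 + w *\<^sub>R (y1 - y)"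
    by (simp add: algebra_simps)
  hence "norm (w1 *\<^sub>R y1 - w *\<^sub>R y) \<le> \<bar>w1 - w\<bar> + w * norm (y1 - y)"
    using norm_triangle_ineq[of "(w1 - w) *\<^sub>R y1" "w *\<^sub>R (y1 - y)"] assms by simp
  also have "\<dots> \<le> \<bar>w1 - w\<bar> + 2 * norm (y1 - y)"
    using assms by (simp add: mult_right_mono)
  finally show ?thesis .
qed

lemma weight_difference_le:
  fixes y y1 p p1 :: "'a::real_inner"
  assumes "norm y1 = 1" and "norm p = 1"
    and "y \<bullet> p = w / 2" and "y1 \<bullet> p1 = w1 / 2"
  shows "\<bar>w1 - w\<bar> \<le> 2 * norm (p1 - p) + 2 * norm (y1 - y)"
proof -
  have "(w1 - w) / 2 = y1 \<bullet> (p1 - p) + (y1 - y) \<bullet> p"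
    using assms(3,4) by (simp add: inner_diff_left inner_diff_right inner_commute)
  moreover have "\<bar>y1 \<bullet> (p1 - p)\<bar> \<le> norm (p1 - p)"
    using Cauchy_Schwarz_ineq2[of y1 "p1 - p"] assms(1) by simp
  moreover have "\<bar>(y1 - y) \<bullet> p\<bar> \<le> norm (y1 - y)"
    using Cauchy_Schwarz_ineq2[of "y1 - y" p] assms(2) by simp
  ultimately show ?thesis by (simp add: abs_le_iff)
qed

lemma arccos_ge_imp_le:
  assumes x: "-1 \<le> x" "x \<le> 1" and ang: "arccos x \<ge> pi / 2 - t"
    and t: "0 \<le> t" "t \<le> pi / 2"
  shows "x \<le> t"
proof -
  have "x = cos (arccos x)" using x by simp
  also have "\<dots> \<le> cos (pi / 2 - t)"
    using ang t x arccos_lbound[of x] arccos_ubound[of x] by (intro cos_monotone_0_pi_le) auto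
  also have "\<dots> = sin t" by (simp add: cos_diff)
  also have "\<dots> \<le> t" using t by (simp add: sin_x_le_x)
  finally show ?thesis .
qed

lemma beta_angle_near_right:
  fixes y y1 :: "'a::real_inner"
  assumes ang: "beta_angle \<omega> y y1 \<ge> pi / 2 - t" and t: "0 \<le> t" "t \<le> pi / 2"
  shows "(y1 - y) \<bullet> (\<omega> y1 *\<^sub>R y1 - \<omega> y *\<^sub>R y)
           \<le> t * (norm (y1 - y) * norm (\<omega> y1 *\<^sub>R y1 - \<omega> y *\<^sub>R y))"
proof -
  define a where "a = y1 - y"
  define b where "b = \<omega> y1 *\<^sub>R y1 - \<omega> y *\<^sub>R y"
  define x where "x = a \<bullet> b / (norm a * norm b)"
  show ?thesis
  proof (cases "norm a * norm b = 0")
    case True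
    thus ?thesis unfolding a_def b_def by auto
  next
    case False
    hence pos: "norm a * norm b > 0" by simp
    have "\<bar>a \<bullet> b\<bar> \<le> norm a * norm b" by (rule Cauchy_Schwarz_ineq2)
    hence "-1 \<le> x" "x \<le> 1" using pos unfolding x_def by (simp_all add: abs_le_iff field_simps)
    moreover have "arccos x \<ge> pi / 2 - t"
      using ang unfolding beta_angle_def a_def b_def x_def Let_def .
    ultimately have "x \<le> t" using t by (rule arccos_ge_imp_le)
    thus ?thesis using pos unfolding x_def a_def b_def by (simp add: divide_le_eq)
  qed
qed

lemma chord_le_image_chord:
  fixes y y1 p p1 :: "'a::real_inner"
  assumes ny: "norm y = 1" and ny1: "norm y1 = 1" and np: "norm p = 1"
    and yp: "y \<bullet> p = w / 2" and yp1: "y1 \<bullet> p1 = w1 / 2"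
    and w: "0 < w" "w \<le> 2" and w1: "0 < w1"
    and near: "(y1 - y) \<bullet> (w1 *\<^sub>R y1 - w *\<^sub>R y)
                 \<le> t * (norm (y1 - y) * norm (w1 *\<^sub>R y1 - w *\<^sub>R y))"
    and t: "0 \<le> t" "12 * t < w1"
  shows "norm (y1 - y) \<le> norm (p1 - p)"
proof (rule ccontr)
  define A where "A = norm (y1 - y)"
  define d where "d = norm (p1 - p)"
  assume "\<not> norm (y1 - y) \<le> norm (p1 - p)"
  hence Ad: "d < A" unfolding A_def d_def by simp
  hence A: "A > 0" using norm_ge_zero[of "p1 - p"] unfolding d_def by linarith
  have nb: "norm (w1 *\<^sub>R y1 - w *\<^sub>R y) \<le> 2 * d + 4 * A"
    using norm_weighted_chord_le[OF ny1, of w w1 y] weight_difference_le[OF ny1 np yp yp1] w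
    unfolding A_def d_def by linarith
  have "(w1 + w) * A\<^sup>2 / 2 \<le> t * (A * norm (w1 *\<^sub>R y1 - w *\<^sub>R y))"
    using near chord_inner_weighted[OF ny ny1] unfolding A_def by simp
  also have "\<dots> \<le> t * (A * (2 * d + 4 * A))"
    using nb A t by (simp add: mult_left_mono)
  also have "\<dots> \<le> t * (A * (6 * A))"
    using Ad A t(1) by (intro mult_left_mono) auto
  finally have "(w1 + w) * A\<^sup>2 \<le> 12 * t * A\<^sup>2"
    by (simp add: algebra_simps power2_eq_square)
  moreover have "12 * t * A\<^sup>2 < w1 * A\<^sup>2" using t A by simp
  moreover have "0 \<le> w * A\<^sup>2" using w by simp
  ultimately show False by (simp add: algebra_simps)
qed

theorem lemma6p9:
  fixes tp sp sm :: "real ^ 'n \<Rightarrow> real ^ 'n"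
    and \<omega> :: "real ^ 'n \<Rightarrow> real"
    and T2 :: "(real ^ 'n) set"
    and y1 :: "real ^ 'n"
  assumes dim: "CARD('n) \<ge> 3"
    and homeo: "homeomorphism (sphere 0 1) (sphere 0 1) tp sp"
    and T2_sub: "T2 \<subseteq> sphere 0 1"
    and sm_cont: "continuous_on T2 sm"
    and sm_inj: "inj_on sm T2"
    and sm_into: "sm ` T2 \<subseteq> sphere 0 1"
    and neq: "\<And>y. y \<in> T2 \<Longrightarrow> sp y \<noteq> sm y"
    and sp_pos: "\<And>y. y \<in> T2 \<Longrightarrow> y \<bullet> sp y > 0"
    and sm_neg: "\<And>y. y \<in> T2 \<Longrightarrow> y \<bullet> sm y < 0"
    and omega_pos: "\<And>y. y \<in> T2 \<Longrightarrow> \<omega> y > 0"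
    and omega_eq: "\<And>y. y \<in> T2 \<Longrightarrow> sp y - sm y = \<omega> y *\<^sub>R y"
    and mono: "\<And>y0 y. y0 \<in> T2 \<Longrightarrow> y \<in> T2 \<Longrightarrow> (sm y - sm y0) \<bullet> (y - y0) \<ge> 0"
    and y1: "y1 \<in> T2"
    and nonempty: "\<not> (\<exists>M. \<forall>m::nat. m > M \<longrightarrow> Theta T2 \<omega> m y1 = {})"
  shows "\<exists>M::real. M > 0 \<and> (\<exists>K::real. K > 0 \<and>
           (\<forall>m::nat. m > 1 \<and> real m > M \<longrightarrow>
              (\<forall>y \<in> Theta T2 \<omega> m y1. norm (sp y1 - sp y) \<ge> K * norm (y1 - y))))"
proof -
  have unit: "norm z = 1" "norm (sp z) = 1" "norm (sm z) = 1" if "z \<in> T2" for z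
  proof -
    have "sp z \<in> sphere 0 1" using homeo T2_sub that unfolding homeomorphism_def by blast
    thus "norm (sp z) = 1" by simp
    show "norm z = 1" "norm (sm z) = 1" using that T2_sub sm_into by auto
  qed
  have weight: "z \<bullet> sp z = \<omega> z / 2" "\<omega> z \<le> 2" if "z \<in> T2" for z
    using unit_split_weight[OF unit[OF that] omega_pos[OF that] omega_eq[OF that]] by auto
  have w1: "\<omega> y1 > 0" using omega_pos y1 .
  have "norm (sp y1 - sp y) \<ge> 1 * norm (y1 - y)"
    if m: "1 < m" "12 / \<omega> y1 < real m" and y: "y \<in> Theta T2 \<omega> m y1" for m y
  proof -
    have yT: "y \<in> T2" and ang: "beta_angle \<omega> y y1 \<ge> pi / 2 - 1 / real m"
      using y unfolding Theta_def by auto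
    have "1 / real m \<le> 1" using m(1) by simp
    hence t: "0 \<le> 1 / real m" "1 / real m \<le> pi / 2" using pi_gt3 by simp_all
    have "12 * (1 / real m) < \<omega> y1" using m w1 by (simp add: field_simps)
    with chord_le_image_chord[OF unit(1)[OF yT] unit(1)[OF y1] unit(2)[OF yT] weight(1)[OF yT]
        weight(1)[OF y1] omega_pos[OF yT] weight(2)[OF yT] w1 beta_angle_near_right[OF ang t] t(1)]
    show ?thesis by simp
  qed
  moreover have "12 / \<omega> y1 > 0" using w1 by simp
  ultimately show ?thesis by (intro exI[of _ "12 / \<omega> y1"] conjI exI[of _ 1]) auto
qed

end
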